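(* Let $n\ge1$ and let $\phi(x)=\Phi(|x|)$ be a radial function on $\mathbb{R}^n$, where $\Phi:[0,\infty)\to[0,\infty)$ is decreasing. Suppose $\phi$ has a continuous integrable radially decreasing majorant. Then for every finite positive measure $V$ on $\mathbb{R}^n$ absolutely continuous with respect to Lebesgue measure and every fixed $\rho>0$, $$\lim_{t\to0^+}\Big\|\mathcal{M}_{\phi}(V_t)(\cdot)-\sup_{r>0}\phi_r(\cdot)\,V(\mathbb{R}^n)\Big\|_{L^{1,\infty}(\mathbb{R}^n\setminus B(0,\rho))}=0.$$
   Context: $\phi_r(x)=r^{-n}\phi(x/r)$ and $\mathcal{M}_{\phi}(\mu)(x)=\sup_{r>0}\frac{1}{r^n}\int_{\mathbb{R}^n}\phi\big(\frac{x-y}{r}\big)d\mu(y)$. A radially decreasing majorant of $\phi$ is a function $K(x)=\kappa(|x|)$ with $\kappa$ decreasing and $\phi\le K$ pointwise. $V_t(E)=V(E/t)$ with $E/t=\{x/t:x\in E\}$. For a measurable set $E$, $\|f\|_{L^{1,\infty}(E)}=\sup_{\lambda>0}\lambda|\{x\in E:|f(x)|>\lambda\}|$. *)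

theory Defs
  imports "HOL-Analysis.Analysis"
begin

definition leb_outer :: "'a::euclidean_space set \<Rightarrow> ennreal" where
  "leb_outer S = (INF A\<in>{A. A \<in> sets lebesgue \<and> S \<subseteq> A}. emeasure lebesgue A)"

definition max_op :: "('a::euclidean_space \<Rightarrow> real) \<Rightarrow> 'a measure \<Rightarrow> 'a \<Rightarrow> ennreal" where
  "max_op \<phi> \<mu> x = (SUP r\<in>{0<..}. ennreal (1 / r ^ DIM('a)) *
      (\<integral>\<^sup>+ y. ennreal (\<phi> ((1 / r) *\<^sub>R (x - y))) \<partial>\<mu>))"

text \<open>V_t(E) = V(E/t): the image of V under y \<mapsto> t y.\<close>
definition dilate_measure :: "real \<Rightarrow> 'a::euclidean_space measure \<Rightarrow> 'a measure" where
  "dilate_measure t V = distr V borel (\<lambda>y. t *\<^sub>R y)"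

definition sup_dil :: "('a::euclidean_space \<Rightarrow> real) \<Rightarrow> 'a \<Rightarrow> ennreal" where
  "sup_dil \<phi> x = (SUP r\<in>{0<..}. ennreal ((1 / r ^ DIM('a)) * \<phi> ((1 / r) *\<^sub>R x)))"

definition weak_L1_norm :: "'a::euclidean_space set \<Rightarrow> ('a \<Rightarrow> ereal) \<Rightarrow> ennreal" where
  "weak_L1_norm E f = (SUP s\<in>{0<..}. ennreal s * leb_outer {x\<in>E. ereal s < \<bar>f x\<bar>})"

end

theory Submission
  imports Defs
begin

text \<open>
  Let n be the dimension and C = sup (u > 0) u^n \<Phi>(u), which is finite because \<Phi>(|x|) is
  integrable; then sup (r > 0) \<phi>_r(x) = C |x|^(-n). Fix R > 0 and 0 < \<delta> < 1 and let t R \<le> \<delta> \<rho>.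
  The measure V_t carries the mass of B(0,R) inside B(0,tR) and only the tail mass
  \<eta>(R) = V(complement of B(0,R)) outside. For |x| \<ge> \<rho> the inner part contributes to M_\<phi>(V_t)(x)
  an amount between C V(B(0,R)) ((1+\<delta>)|x|)^(-n) and C V(B(0,R)) ((1-\<delta>)|x|)^(-n). Decomposing \<Phi>
  over dyadic annuli, the outer part contributes at most m times the sum of \<Phi>(2^k) 2^((k+1)n),
  which is finite by integrability, at every point around which the tail has density at most m
  in all balls; by the Vitali covering lemma the remaining points form a set of measure
  O(\<eta>(R)/m). So the set where the deviation exceeds s has measure O((\<eta>(R) + distortion(\<delta>))/s),
  uniformly in t \<le> \<delta>\<rho>/R; let R tend to infinity and then \<delta> to 0.
\<close>

section \<open>Points of high density\<close>

lemma emeasure_UN_countable_le: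
  assumes [measurable]: "\<And>i. i \<in> I \<Longrightarrow> X i \<in> sets M" and I: "countable I"
  shows "emeasure M (\<Union>(X ` I)) \<le> (\<integral>\<^sup>+i. emeasure M (X i) \<partial>count_space I)"
proof -
  note sets.countable_UN'[unfolded subset_eq, measurable]
  have le: "indicator (\<Union>(X ` I)) x \<le> (\<integral>\<^sup>+ i. indicator (X i) x \<partial>count_space I)" for x
  proof (cases "x \<in> \<Union>(X ` I)")
    case True
    then obtain j where j: "j \<in> I" "x \<in> X j" by auto
    have "(\<integral>\<^sup>+ i. indicator {j} i \<partial>count_space I) \<le> (\<integral>\<^sup>+ i. indicator (X i) x \<partial>count_space I)"
      by (intro nn_integral_mono) (auto simp: j split: split_indicator)
    moreover have "(\<integral>\<^sup>+ i. indicator {j} i \<partial>count_space I) = (1::ennreal)"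
      using j by (subst nn_integral_indicator) auto
    ultimately show ?thesis using True by simp
  qed simp
  have "emeasure M (\<Union>(X ` I)) = (\<integral>\<^sup>+x. indicator (\<Union>(X ` I)) x \<partial>M)"
    using I by simp
  also have "\<dots> \<le> (\<integral>\<^sup>+x. \<integral>\<^sup>+ i. indicator (X i) x \<partial>count_space I \<partial>M)"
    by (intro nn_integral_mono le)
  also have "\<dots> = (\<integral>\<^sup>+i. \<integral>\<^sup>+x. indicator (X i) x \<partial>M \<partial>count_space I)"
    using I by (intro nn_integral_count_space_nn_integral) auto
  also have "\<dots> = (\<integral>\<^sup>+i. emeasure M (X i) \<partial>count_space I)"
    by (intro nn_integral_cong) auto
  finally show ?thesis .
qed

lemma leb_outer_le_emeasure:
  assumes "S \<subseteq> A" "A \<in> sets borel"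
  shows "leb_outer S \<le> emeasure lborel A"
proof -
  have "leb_outer S \<le> emeasure lebesgue A"
    unfolding leb_outer_def by (rule INF_lower) (use assms in auto)
  then show ?thesis using assms(2) by simp
qed

lemma radius_le_of_mass_bound:
  fixes m r \<eta> :: real
  assumes "0 < m" "0 < r" "1 \<le> n" "m * r ^ n < \<eta>"
  shows "r \<le> max 1 (\<eta> / m)"
proof (cases "r \<le> 1")
  case False
  then have "r \<le> r ^ n"
    using assms(3) by (metis less_eq_real_def not_le one_le_power power_increasing power_one_right)
  then have "m * r < \<eta>" using assms by (smt (verit) mult_left_mono)
  then have "r < \<eta> / m" using assms(1) by (simp add: field_simps)
  then show ?thesis by simp
qed simp

definition high_density_set :: "'a::euclidean_space measure \<Rightarrow> 'a set \<Rightarrow> real \<Rightarrow> 'a set" where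
  "high_density_set \<mu> A m = {x. \<exists>s>0. ennreal (m * s ^ DIM('a)) < emeasure \<mu> (ball x s \<inter> A)}"

lemma emeasure_UN_enlarged_balls_le:
  fixes \<mu> :: "'a::euclidean_space measure"
  assumes sets: "sets \<mu> = sets borel" and A: "A \<in> sets borel" and C: "countable C" and m: "0 < m"
    and disj: "pairwise (\<lambda>i j. disjnt (ball i (r i)) (ball j (r j))) C"
    and r: "\<And>i. i \<in> C \<Longrightarrow> 0 < r i \<and> ennreal (m * r i ^ DIM('a)) < emeasure \<mu> (ball i (r i) \<inter> A)"
  shows "emeasure lborel (\<Union>i\<in>C. ball i (5 * r i))
    \<le> ennreal (5 ^ DIM('a) * unit_ball_vol (real DIM('a)) / m) * emeasure \<mu> A"
proof -
  define c where "c = 5 ^ DIM('a) * unit_ball_vol (real DIM('a)) / m"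
  have "emeasure lborel (\<Union>i\<in>C. ball i (5 * r i)) \<le> (\<integral>\<^sup>+i. emeasure lborel (ball i (5 * r i)) \<partial>count_space C)"
    using C by (intro emeasure_UN_countable_le) auto
  also have "\<dots> \<le> (\<integral>\<^sup>+i. ennreal c * emeasure \<mu> (ball i (r i) \<inter> A) \<partial>count_space C)"
  proof (intro nn_integral_mono)
    fix i assume "i \<in> space (count_space C)"
    then have i: "i \<in> C" by simp
    have "emeasure lborel (ball i (5 * r i)) = ennreal c * ennreal (m * r i ^ DIM('a))"
      using m r[OF i] by (simp add: emeasure_ball c_def ennreal_mult'[symmetric] power_mult_distrib field_simps)
    also have "\<dots> \<le> ennreal c * emeasure \<mu> (ball i (r i) \<inter> A)"
      using r[OF i] by (intro mult_left_mono) auto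
    finally show "emeasure lborel (ball i (5 * r i)) \<le> \<dots>" .
  qed
  also have "\<dots> = ennreal c * (\<integral>\<^sup>+i. emeasure \<mu> (ball i (r i) \<inter> A) \<partial>count_space C)"
    by (rule nn_integral_cmult) simp
  also have "(\<integral>\<^sup>+i. emeasure \<mu> (ball i (r i) \<inter> A) \<partial>count_space C) = emeasure \<mu> (\<Union>i\<in>C. ball i (r i) \<inter> A)"
  proof (rule emeasure_UN_countable[symmetric])
    show "disjoint_family_on (\<lambda>i. ball i (r i) \<inter> A) C"
      using disj unfolding disjoint_family_on_def pairwise_def disjnt_def by fastforce
  qed (use C sets A in auto)
  also have "emeasure \<mu> (\<Union>i\<in>C. ball i (r i) \<inter> A) \<le> emeasure \<mu> A"
    by (rule emeasure_mono) (use sets A in auto)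
  finally show ?thesis unfolding c_def by (simp add: mult_left_mono)
qed

text \<open>The weak type (1,1) bound for the uncentred maximal function of \<open>\<mu>\<close> restricted to \<open>A\<close>.\<close>
lemma high_density_set_cover:
  fixes \<mu> :: "'a::euclidean_space measure"
  assumes sets: "sets \<mu> = sets borel" and A: "A \<in> sets borel"
    and fin: "emeasure \<mu> A < \<infinity>" and m: "0 < m"
  obtains U where "U \<in> sets borel" "high_density_set \<mu> A m \<subseteq> U"
    "emeasure lborel U \<le> ennreal (5 ^ DIM('a) * unit_ball_vol (real DIM('a)) / m) * emeasure \<mu> A"
proof -
  define n where "n = DIM('a)"
  have n: "1 \<le> n" unfolding n_def by (simp add: DIM_positive Suc_leI)
  define E where "E = high_density_set \<mu> A m"
  define r where "r x = (SOME s. s > 0 \<and> ennreal (m * s ^ n) < emeasure \<mu> (ball x s \<inter> A))" for x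
  have r: "r x > 0 \<and> ennreal (m * r x ^ n) < emeasure \<mu> (ball x (r x) \<inter> A)" if "x \<in> E" for x
  proof -
    have "\<exists>s. s > 0 \<and> ennreal (m * s ^ n) < emeasure \<mu> (ball x s \<inter> A)"
      using that unfolding E_def high_density_set_def n_def by auto
    from someI_ex[OF this] show ?thesis unfolding r_def .
  qed
  define \<eta> where "\<eta> = enn2real (emeasure \<mu> A)"
  have r_bounded: "0 < r x \<and> r x \<le> max 1 (\<eta> / m)" if "x \<in> E" for x
  proof -
    have "emeasure \<mu> (ball x (r x) \<inter> A) \<le> emeasure \<mu> A"
      by (rule emeasure_mono) (use sets A in auto)
    moreover have "emeasure \<mu> A = ennreal \<eta>" unfolding \<eta>_def using fin by simp
    ultimately have "ennreal (m * r x ^ n) < ennreal \<eta>" using r[OF that] by (metis order.strict_trans2)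
    then have "m * r x ^ n < \<eta>" by (subst (asm) ennreal_less_iff) (use r[OF that] m in auto)
    then have "r x \<le> max 1 (\<eta> / m)"
      using r[OF that] by (intro radius_le_of_mass_bound[OF m _ n]) auto
    then show ?thesis using r[OF that] by simp
  qed
  have "E \<subseteq> (\<Union>i\<in>E. ball (id i) (r i))" using r by force
  then obtain C where C: "countable C" "C \<subseteq> E"
    and disj: "pairwise (\<lambda>i j. disjnt (ball (id i) (r i)) (ball (id j) (r j))) C"
    and cover: "E \<subseteq> (\<Union>i\<in>C. ball (id i) (5 * r i))"
    by (rule Vitali_covering_lemma_balls[OF _ r_bounded]) auto
  show ?thesis
  proof (rule that)
    show "(\<Union>i\<in>C. ball i (5 * r i)) \<in> sets borel" by (intro borel_open) auto
    show "high_density_set \<mu> A m \<subseteq> (\<Union>i\<in>C. ball i (5 * r i))" using cover unfolding E_def by simp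
    show "emeasure lborel (\<Union>i\<in>C. ball i (5 * r i))
      \<le> ennreal (5 ^ DIM('a) * unit_ball_vol (real DIM('a)) / m) * emeasure \<mu> A"
      using C disj r unfolding n_def by (intro emeasure_UN_enlarged_balls_le[OF sets A C(1) m]) auto
  qed
qed

section \<open>Dyadic annuli\<close>

lemma dyadic_interval:
  fixes q :: real assumes "1 \<le> q"
  obtains k :: nat where "2 ^ k \<le> q" "q < 2 ^ (k + 1)"
proof -
  have ex: "\<exists>N::nat. q < 2 ^ N" by (rule real_arch_pow) simp
  define N where "N = (LEAST N::nat. q < 2 ^ N)"
  have N: "q < 2 ^ N" unfolding N_def using LeastI_ex[OF ex] .
  have "N \<noteq> 0" by (rule notI) (use N assms in simp)
  then obtain k where k: "N = k + 1" by (cases N) auto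
  have "\<not> q < 2 ^ k" using not_less_Least[of k "\<lambda>N::nat. q < 2 ^ N"] k unfolding N_def by simp
  then show ?thesis using N k by (intro that) (auto simp: not_less)
qed

definition dyadic_annulus :: "nat \<Rightarrow> 'a::euclidean_space set" where
  "dyadic_annulus k = ball 0 (2 ^ k) - ball 0 (2 ^ k / 2)"

lemma dyadic_annulus_disjoint:
  assumes "k < j"
  shows "dyadic_annulus k \<inter> (dyadic_annulus j :: 'a::euclidean_space set) = {}"
proof -
  have "(2::real) ^ k \<le> 2 ^ j / 2" using power_increasing[of "Suc k" j "2::real"] assms by simp
  then show ?thesis unfolding dyadic_annulus_def by auto
qed

lemma disjoint_family_dyadic_annulus: "disjoint_family (dyadic_annulus :: nat \<Rightarrow> 'a::euclidean_space set)"
  unfolding disjoint_family_on_def by (metis Int_commute dyadic_annulus_disjoint linorder_neqE_nat)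

lemma emeasure_dyadic_annulus:
  "emeasure lborel (dyadic_annulus k :: 'a::euclidean_space set)
     = ennreal (unit_ball_vol (real DIM('a)) * (1 - 1 / 2 ^ DIM('a)) * 2 ^ (k * DIM('a)))"
proof -
  define \<omega> where "\<omega> = unit_ball_vol (real DIM('a))"
  have \<omega>: "\<omega> > 0" unfolding \<omega>_def by simp
  have "emeasure lborel (dyadic_annulus k :: 'a set)
      = emeasure lborel (ball (0::'a) (2 ^ k)) - emeasure lborel (ball (0::'a) (2 ^ k / 2))"
    unfolding dyadic_annulus_def by (intro emeasure_Diff subset_ball) (auto simp: emeasure_ball)
  also have "\<dots> = ennreal (\<omega> * (2 ^ k) ^ DIM('a)) - ennreal (\<omega> * (2 ^ k / 2) ^ DIM('a))"
    by (simp add: emeasure_ball \<omega>_def)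
  also have "\<dots> = ennreal (\<omega> * (2 ^ k) ^ DIM('a) - \<omega> * (2 ^ k / 2) ^ DIM('a))"
    using \<omega> by (intro ennreal_minus) (auto intro!: mult_left_mono power_mono)
  also have "\<omega> * (2 ^ k) ^ DIM('a) - \<omega> * (2 ^ k / 2) ^ DIM('a) = \<omega> * (1 - 1 / 2 ^ DIM('a)) * 2 ^ (k * DIM('a))"
    by (simp add: power_divide power_mult[symmetric] mult.commute field_simps)
  finally show ?thesis unfolding \<omega>_def .
qed

section \<open>Dilated measures and the limit \<open>t \<rightarrow> 0\<close>\<close>

lemma sets_dilate_measure [simp]: "sets (dilate_measure t V) = sets borel"
  unfolding dilate_measure_def by simp

lemma emeasure_dilate_measure:
  assumes "sets V = sets borel" "A \<in> sets borel"
  shows "emeasure (dilate_measure t V) A = emeasure V ((\<lambda>y. t *\<^sub>R y) -` A)"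
  unfolding dilate_measure_def using assms sets_eq_imp_space_eq[OF assms(1)]
  by (subst emeasure_distr) (auto simp: measurable_cong_sets[OF assms(1) refl])

lemma emeasure_dilate_measure_cball:
  fixes V :: "'a::euclidean_space measure"
  assumes "sets V = sets borel" "0 < t"
  shows "emeasure (dilate_measure t V) UNIV = emeasure V UNIV"
    and "emeasure (dilate_measure t V) (UNIV - cball 0 (t * R)) = emeasure V (UNIV - cball 0 R)"
proof -
  have "emeasure (dilate_measure t V) (UNIV - cball 0 (t * R))
      = emeasure V ((\<lambda>y. t *\<^sub>R y) -` (UNIV - cball 0 (t * R)))"
    using assms(1) by (intro emeasure_dilate_measure) auto
  also have "(\<lambda>y. t *\<^sub>R y) -` (UNIV - cball 0 (t * R)) = UNIV - cball (0::'a) R"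
    using assms(2) by auto
  finally show "emeasure (dilate_measure t V) (UNIV - cball 0 (t * R)) = emeasure V (UNIV - cball 0 R)" .
  show "emeasure (dilate_measure t V) UNIV = emeasure V UNIV"
    using assms(1) by (simp add: emeasure_dilate_measure)
qed

lemma tendsto_measure_compl_cball:
  fixes M :: "'a::euclidean_space measure"
  assumes "finite_measure M" "sets M = sets borel"
  shows "((\<lambda>R. measure M (UNIV - cball 0 R)) \<longlongrightarrow> 0) at_top"
proof -
  interpret finite_measure M by fact
  have sets: "UNIV - cball (0::'a) R \<in> sets M" for R using assms(2) by auto
  have "(\<lambda>k. measure M (UNIV - cball 0 (real k))) \<longlonglongrightarrow> measure M (\<Inter>k. UNIV - cball (0::'a) (real k))"
    using sets by (intro Lim_measure_decseq) (auto simp: decseq_def)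
  moreover have "(\<Inter>k. UNIV - cball (0::'a) (real k)) = {}"
    using reals_Archimedean2 by (fastforce intro: less_imp_le)
  ultimately have "(\<lambda>k. - measure M (UNIV - cball 0 (real k))) \<longlonglongrightarrow> - measure M {}"
    by (intro tendsto_minus) (simp only:)
  moreover have "mono (\<lambda>R. - measure M (UNIV - cball (0::'a) R))"
    using sets by (intro monoI) (auto intro!: finite_measure_mono)
  ultimately have "((\<lambda>R. - measure M (UNIV - cball (0::'a) R)) \<longlongrightarrow> - 0) at_top"
    by (intro tendsto_at_topI_sequentially_real) auto
  from tendsto_minus[OF this] show ?thesis by simp
qed

lemma tendsto_zero_at_right_of_two_scale_bound:
  fixes h :: "real \<Rightarrow> ennreal" and \<eta> g :: "real \<Rightarrow> real"
  assumes \<rho>: "0 < \<rho>"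
    and bound: "\<And>R \<delta> t. 0 < R \<Longrightarrow> 0 < \<delta> \<Longrightarrow> \<delta> < 1 \<Longrightarrow> 0 < t \<Longrightarrow> t * R \<le> \<delta> * \<rho> \<Longrightarrow> h t \<le> ennreal (\<eta> R + g \<delta>)"
    and \<eta>: "(\<eta> \<longlongrightarrow> 0) at_top" and g: "(g \<longlongrightarrow> 0) (at_right 0)"
  shows "(h \<longlongrightarrow> 0) (at_right 0)"
proof (rule tendsto_zero_ennreal)
  fix \<epsilon> :: real assume \<epsilon>: "0 < \<epsilon>"
  have "eventually (\<lambda>R. \<eta> R < \<epsilon> / 2) at_top" using \<eta> \<epsilon> by (intro order_tendstoD(2)) auto
  then obtain N where N: "\<And>R. N \<le> R \<Longrightarrow> \<eta> R < \<epsilon> / 2" unfolding eventually_at_top_linorder by auto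
  define R where "R = max 1 N"
  have R: "0 < R" "\<eta> R < \<epsilon> / 2" unfolding R_def using N by auto
  have "eventually (\<lambda>\<delta>. g \<delta> < \<epsilon> / 2) (at_right 0)" using g \<epsilon> by (intro order_tendstoD(2)) auto
  then obtain b where b: "0 < b" "\<And>\<delta>. 0 < \<delta> \<Longrightarrow> \<delta> < b \<Longrightarrow> g \<delta> < \<epsilon> / 2"
    unfolding eventually_at_right_field by auto
  define \<delta> where "\<delta> = min (b / 2) (1 / 2)"
  have \<delta>: "0 < \<delta>" "\<delta> < 1" "g \<delta> < \<epsilon> / 2" unfolding \<delta>_def using b by auto
  show "eventually (\<lambda>t. h t < ennreal \<epsilon>) (at_right 0)"
    unfolding eventually_at_right_field
  proof (intro exI conjI allI impI)
    show "0 < \<delta> * \<rho> / R" using \<delta> \<rho> R by simp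
    fix t :: real assume t: "0 < t" "t < \<delta> * \<rho> / R"
    then have "h t \<le> ennreal (\<eta> R + g \<delta>)" using R \<delta> by (intro bound) (auto simp: field_simps)
    also have "\<dots> < ennreal \<epsilon>" using R \<delta> \<epsilon> by (intro ennreal_lessI) auto
    finally show "h t < ennreal \<epsilon>" .
  qed
qed

section \<open>Radially decreasing profiles\<close>

text \<open>Bounds the relative change of \<open>X\<^sup>-\<^sup>n\<close> when \<open>X\<close> moves within \<open>[(1 - \<delta>) X, (1 + \<delta>) X]\<close>.\<close>
definition power_distortion :: "nat \<Rightarrow> real \<Rightarrow> real" where
  "power_distortion n \<delta> = (1 / (1 - \<delta>) ^ n - 1) + (1 - 1 / (1 + \<delta>) ^ n)"

lemma power_distortion_bounds:
  assumes "0 \<le> \<delta>" "\<delta> < 1"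
  shows "1 \<le> 1 / (1 - \<delta>) ^ n" "0 \<le> 1 / (1 + \<delta>) ^ n" "1 / (1 + \<delta>) ^ n \<le> 1"
    and "0 \<le> power_distortion n \<delta>"
proof -
  have "(1 - \<delta>) ^ n \<le> 1" "0 < (1 - \<delta>) ^ n" "1 \<le> (1 + \<delta>) ^ n"
    using assms by (auto intro: power_le_one one_le_power)
  then show "1 \<le> 1 / (1 - \<delta>) ^ n" "0 \<le> 1 / (1 + \<delta>) ^ n" "1 / (1 + \<delta>) ^ n \<le> 1"
    by auto
  then show "0 \<le> power_distortion n \<delta>" unfolding power_distortion_def by linarith
qed

lemma power_distortion_tendsto_0: "(power_distortion n \<longlongrightarrow> 0) (at_right 0)"
proof -
  have "((\<lambda>\<delta>. (1 / (1 - \<delta>) ^ n - 1) + (1 - 1 / (1 + \<delta>) ^ n))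
      \<longlongrightarrow> (1 / (1 - 0) ^ n - 1) + (1 - 1 / (1 + 0) ^ n)) (at_right (0::real))"
    by (intro tendsto_intros) auto
  then show ?thesis by (simp add: power_distortion_def[abs_def])
qed

lemma inverse_power_shift_bounds:
  fixes X a \<delta> :: real
  assumes X: "0 < X" and a: "0 \<le> a" "a \<le> \<delta> * X" and \<delta>: "0 \<le> \<delta>" "\<delta> < 1"
  shows "1 / (X - a) ^ n \<le> 1 / (1 - \<delta>) ^ n * (1 / X ^ n)"
    and "1 / (1 + \<delta>) ^ n * (1 / X ^ n) \<le> 1 / (X + a) ^ n"
proof -
  have shift: "(1 - \<delta>) * X \<le> X - a" and pos: "0 < (1 - \<delta>) * X" using a X \<delta> by (auto simp: algebra_simps)
  moreover have "0 < X - a" using shift pos by linarith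
  ultimately have "1 / (X - a) ^ n \<le> 1 / ((1 - \<delta>) * X) ^ n"
    by (intro divide_left_mono power_mono) auto
  then show "1 / (X - a) ^ n \<le> 1 / (1 - \<delta>) ^ n * (1 / X ^ n)" by (simp add: power_mult_distrib)
  have "X + a \<le> (1 + \<delta>) * X" "0 < X + a" using a X by (auto simp: algebra_simps)
  then have "1 / ((1 + \<delta>) * X) ^ n \<le> 1 / (X + a) ^ n"
    by (intro divide_left_mono power_mono mult_pos_pos zero_less_power) (use X \<delta> in auto)
  then show "1 / (1 + \<delta>) ^ n * (1 / X ^ n) \<le> 1 / (X + a) ^ n" by (simp add: power_mult_distrib)
qed

lemma abs_deviation_le:
  fixes P F \<eta> q1 q2 e M :: real
  assumes "0 \<le> P" "0 \<le> \<eta>" "\<eta> \<le> F" "1 \<le> q1" "0 \<le> q2" "q2 \<le> 1" "0 \<le> e"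
    and lower: "P * (F - \<eta>) * q2 \<le> M" and upper: "M \<le> P * F * q1 + e"
  shows "\<bar>M - P * F\<bar> \<le> e + P * (F * ((q1 - 1) + (1 - q2)) + \<eta>)"
proof -
  have "0 \<le> P * F * (1 - q2)" "P * \<eta> * q2 \<le> P * \<eta>" "0 \<le> P * F * (q1 - 1)"
    using assms by (auto intro!: mult_nonneg_nonneg mult_left_le)
  moreover have "M - P * F \<le> e + P * F * (q1 - 1)" using upper by (simp add: algebra_simps)
  moreover have "P * F - M \<le> P * F * (1 - q2) + P * \<eta> * q2" using lower by (simp add: algebra_simps)
  moreover have "e + P * (F * ((q1 - 1) + (1 - q2)) + \<eta>) = e + P * F * (q1 - 1) + P * F * (1 - q2) + P * \<eta>"
    by (simp add: algebra_simps)
  moreover note \<open>0 \<le> e\<close> \<open>0 \<le> P\<close> \<open>0 \<le> \<eta>\<close>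
  ultimately have "M - P * F \<le> e + P * (F * ((q1 - 1) + (1 - q2)) + \<eta>)"
    and "P * F - M \<le> e + P * (F * ((q1 - 1) + (1 - q2)) + \<eta>)"
    by (smt (verit) mult_nonneg_nonneg)+
  then show ?thesis by (simp add: abs_le_iff)
qed

lemma max_op_radial:
  "max_op (\<lambda>z. \<Phi> (norm z)) \<mu> x
     = (SUP r\<in>{0<..}. ennreal (1 / r ^ DIM('a)) * (\<integral>\<^sup>+ y. ennreal (\<Phi> (norm (x - y) / r)) \<partial>\<mu>))"
  for x :: "'a::euclidean_space"
  unfolding max_op_def
  by (intro SUP_cong refl arg_cong2[where f="(*)"] nn_integral_cong) (auto simp: divide_inverse mult.commute)

locale decreasing_profile =
  fixes \<Phi> :: "real \<Rightarrow> real"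
  assumes Phi_nonneg: "\<And>s. 0 \<le> s \<Longrightarrow> 0 \<le> \<Phi> s"
    and Phi_antimono: "antimono_on {0..} \<Phi>"
begin

lemma Phi_le: "0 \<le> a \<Longrightarrow> a \<le> b \<Longrightarrow> \<Phi> b \<le> \<Phi> a"
  using Phi_antimono by (auto simp: monotone_on_def)

lemma borel_measurable_Phi_dist:
  assumes r: "0 < r"
  shows "(\<lambda>y. ennreal (\<Phi> (norm (x - y) / r))) \<in> borel_measurable (borel :: 'a::euclidean_space measure)"
proof -
  have "mono (\<lambda>s. - \<Phi> (max 0 s))" by (intro monoI) (auto intro!: Phi_le)
  then have "(\<lambda>s. - (- \<Phi> (max 0 s))) \<in> borel_measurable borel"
    by (intro borel_measurable_uminus borel_measurable_mono)
  then have "(\<lambda>s. \<Phi> (max 0 s)) \<in> borel_measurable borel" by simp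
  then have "(\<lambda>y. \<Phi> (max 0 (norm (x - y) / r))) \<in> borel_measurable (borel :: 'a measure)"
    by (rule measurable_compose[rotated]) measurable
  also have "(\<lambda>y. \<Phi> (max 0 (norm (x - y) / r))) = (\<lambda>y. \<Phi> (norm (x - y) / r))"
    using r by (auto simp: max_def)
  finally show ?thesis by measurable
qed

definition sup_pow_Phi :: "nat \<Rightarrow> ennreal" where
  "sup_pow_Phi n = (SUP u\<in>{0<..}. ennreal (u ^ n * \<Phi> u))"

definition dyadic_sum :: "nat \<Rightarrow> ennreal" where
  "dyadic_sum n = ennreal (\<Phi> 0) + (\<Sum>k. ennreal (\<Phi> (2 ^ k) * 2 ^ ((k + 1) * n)))"

lemma SUP_dilate_Phi:
  assumes s: "0 < s"
  shows "(SUP r\<in>{0<..}. ennreal (1 / r ^ n * \<Phi> (s / r))) = ennreal (1 / s ^ n) * sup_pow_Phi n"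
proof -
  have img: "(\<lambda>r. s / r) ` {0<..} = ({0<..} :: real set)"
  proof (rule set_eqI, rule iffI)
    fix u :: real assume "u \<in> {0<..}"
    then have "u = s / (s / u)" "s / u \<in> {0<..}" using s by auto
    then show "u \<in> (\<lambda>r. s / r) ` {0<..}" by blast
  qed (use s in auto)
  have "ennreal (1 / s ^ n) * sup_pow_Phi n = (SUP u\<in>(\<lambda>r. s / r) ` {0<..}. ennreal (1 / s ^ n) * ennreal (u ^ n * \<Phi> u))"
    unfolding sup_pow_Phi_def SUP_mult_left_ennreal img ..
  also have "\<dots> = (SUP r\<in>{0<..}. ennreal (1 / r ^ n * \<Phi> (s / r)))"
    unfolding image_image
  proof (intro SUP_cong refl)
    fix r :: real assume "r \<in> {0<..}"
    then show "ennreal (1 / s ^ n) * ennreal ((s / r) ^ n * \<Phi> (s / r)) = ennreal (1 / r ^ n * \<Phi> (s / r))"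
      using s Phi_nonneg[of "s / r"] by (simp add: ennreal_mult'[symmetric] power_divide)
  qed
  finally show ?thesis ..
qed

lemma sup_dil_radial:
  fixes x :: "'a::euclidean_space"
  assumes "x \<noteq> 0"
  shows "sup_dil (\<lambda>z. \<Phi> (norm z)) x = ennreal (1 / norm x ^ DIM('a)) * sup_pow_Phi DIM('a)"
proof -
  have "sup_dil (\<lambda>z. \<Phi> (norm z)) x = (SUP r\<in>{0<..}. ennreal (1 / r ^ DIM('a) * \<Phi> (norm x / r)))"
    unfolding sup_dil_def by (intro SUP_cong refl) (auto simp: divide_inverse mult.commute)
  also have "\<dots> = ennreal (1 / norm x ^ DIM('a)) * sup_pow_Phi DIM('a)"
    using assms by (intro SUP_dilate_Phi) simp
  finally show ?thesis .
qed

lemma sup_pow_Phi_finite: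
  assumes "(\<integral>\<^sup>+ (z::'a::euclidean_space). ennreal (\<Phi> (norm z)) \<partial>lborel) < \<infinity>"
  shows "sup_pow_Phi DIM('a) < \<infinity>"
proof -
  define \<omega> where "\<omega> = unit_ball_vol (real DIM('a))"
  have \<omega>: "0 < \<omega>" unfolding \<omega>_def by simp
  have "ennreal (u ^ DIM('a) * \<Phi> u) * ennreal \<omega> \<le> (\<integral>\<^sup>+ (z::'a). ennreal (\<Phi> (norm z)) \<partial>lborel)"
    if u: "0 < u" for u
  proof -
    have "ennreal (u ^ DIM('a) * \<Phi> u) * ennreal \<omega> = ennreal (\<Phi> u) * ennreal (\<omega> * u ^ DIM('a))"
      using u \<omega> Phi_nonneg[of u] by (simp add: ennreal_mult'[symmetric] mult_ac)
    also have "\<dots> = (\<integral>\<^sup>+ (z::'a). ennreal (\<Phi> u) * indicator (ball 0 u) z \<partial>lborel)"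
      using u by (simp add: nn_integral_cmult_indicator emeasure_ball \<omega>_def)
    also have "\<dots> \<le> (\<integral>\<^sup>+ (z::'a). ennreal (\<Phi> (norm z)) \<partial>lborel)"
      by (intro nn_integral_mono) (auto simp: indicator_def intro!: ennreal_leI Phi_le)
    finally show ?thesis .
  qed
  then have "sup_pow_Phi DIM('a) * ennreal \<omega> \<le> (\<integral>\<^sup>+ (z::'a). ennreal (\<Phi> (norm z)) \<partial>lborel)"
    unfolding sup_pow_Phi_def SUP_mult_right_ennreal by (intro SUP_least) auto
  then have "sup_pow_Phi DIM('a) * ennreal \<omega> < \<infinity>" using assms by order
  then show ?thesis using \<omega> by (auto simp: ennreal_mult_less_top infinity_ennreal_def)
qed

lemma dyadic_annuli_series_le:
  "(\<Sum>k. ennreal (\<Phi> (2 ^ k)) * indicator (dyadic_annulus k) z) \<le> ennreal (\<Phi> (norm z))"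
proof (cases "\<exists>j. z \<in> dyadic_annulus j")
  case True
  then obtain j where j: "z \<in> dyadic_annulus j" by blast
  then have "z \<notin> dyadic_annulus k" if "k \<noteq> j" for k
    using disjoint_family_dyadic_annulus that unfolding disjoint_family_on_def by blast
  then have "(\<lambda>k. ennreal (\<Phi> (2 ^ k)) * indicator (dyadic_annulus k) z) = (\<lambda>k. if k = j then ennreal (\<Phi> (2 ^ j)) else 0)"
    using j by (auto simp: fun_eq_iff)
  then have "(\<Sum>k. ennreal (\<Phi> (2 ^ k)) * indicator (dyadic_annulus k) z) = ennreal (\<Phi> (2 ^ j))"
    using sums_unique[OF sums_single[of j "\<lambda>_. ennreal (\<Phi> (2 ^ j))"]] by simp
  also have "\<dots> \<le> ennreal (\<Phi> (norm z))"
    using j unfolding dyadic_annulus_def by (auto intro!: ennreal_leI Phi_le)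
  finally show ?thesis .
qed auto

lemma dyadic_sum_finite:
  assumes "(\<integral>\<^sup>+ (z::'a::euclidean_space). ennreal (\<Phi> (norm z)) \<partial>lborel) < \<infinity>"
  shows "dyadic_sum DIM('a) < \<infinity>"
proof -
  define n where "n = DIM('a)"
  define v where "v = unit_ball_vol (real n) * (1 - 1 / 2 ^ n)"
  have v: "v > 0" unfolding v_def n_def by (simp add: DIM_positive)
  have [measurable]: "dyadic_annulus k \<in> sets (borel :: 'a measure)" for k
    unfolding dyadic_annulus_def by auto
  have "(\<Sum>k. ennreal (\<Phi> (2 ^ k)) * emeasure lborel (dyadic_annulus k :: 'a set))
      = (\<Sum>k. \<integral>\<^sup>+ (z::'a). ennreal (\<Phi> (2 ^ k)) * indicator (dyadic_annulus k) z \<partial>lborel)"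
    by (intro suminf_cong) (simp add: nn_integral_cmult_indicator)
  also have "\<dots> = (\<integral>\<^sup>+ (z::'a). (\<Sum>k. ennreal (\<Phi> (2 ^ k)) * indicator (dyadic_annulus k) z) \<partial>lborel)"
    by (intro nn_integral_suminf[symmetric]) measurable
  also have "\<dots> \<le> (\<integral>\<^sup>+ (z::'a). ennreal (\<Phi> (norm z)) \<partial>lborel)"
    by (intro nn_integral_mono dyadic_annuli_series_le)
  finally have annuli: "(\<Sum>k. ennreal (\<Phi> (2 ^ k)) * emeasure lborel (dyadic_annulus k :: 'a set)) < \<infinity>"
    using assms by order
  have vol: "emeasure lborel (dyadic_annulus k :: 'a set) = ennreal (v * 2 ^ (k * n))" for k
    unfolding v_def n_def by (rule emeasure_dyadic_annulus)
  have "ennreal (\<Phi> (2 ^ k) * 2 ^ ((k + 1) * n))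
      = ennreal (2 ^ n / v) * (ennreal (\<Phi> (2 ^ k)) * emeasure lborel (dyadic_annulus k :: 'a set))" for k
    using v Phi_nonneg[of "2 ^ k"]
    by (simp add: vol ennreal_mult'[symmetric] power_add mult.commute[of k n] power_mult)
  then have "(\<Sum>k. ennreal (\<Phi> (2 ^ k) * 2 ^ ((k + 1) * n)))
     = ennreal (2 ^ n / v) * (\<Sum>k. ennreal (\<Phi> (2 ^ k)) * emeasure lborel (dyadic_annulus k :: 'a set))"
    by (simp only: ennreal_suminf_cmult)
  also have "\<dots> < \<infinity>" using annuli by (simp add: ennreal_mult_less_top)
  finally show ?thesis unfolding dyadic_sum_def n_def by simp
qed

lemma Phi_le_dyadic_series:
  fixes w :: "'a::euclidean_space"
  assumes r: "0 < r"
  shows "ennreal (\<Phi> (norm w / r)) \<le> ennreal (\<Phi> 0) * indicator (ball 0 r) w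
          + (\<Sum>k. ennreal (\<Phi> (2 ^ k)) * indicator (ball 0 (2 ^ (k + 1) * r)) w)"
proof (cases "norm w < r")
  case True
  then have "\<Phi> (norm w / r) \<le> \<Phi> 0" using r by (intro Phi_le) auto
  then show ?thesis using True by (intro add_increasing2) (auto intro: ennreal_leI)
next
  case False
  then have "1 \<le> norm w / r" using r by simp
  then obtain k :: nat where k: "2 ^ k \<le> norm w / r" "norm w / r < 2 ^ (k + 1)"
    by (rule dyadic_interval)
  have "\<Phi> (norm w / r) \<le> \<Phi> (2 ^ k)" using k by (intro Phi_le) auto
  moreover have "w \<in> ball 0 (2 ^ (k + 1) * r)" using k r by (simp add: field_simps)
  ultimately have "ennreal (\<Phi> (norm w / r)) \<le> ennreal (\<Phi> (2 ^ k)) * indicator (ball 0 (2 ^ (k + 1) * r)) w"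
    by (simp add: ennreal_leI)
  also have "\<dots> \<le> (\<Sum>k. ennreal (\<Phi> (2 ^ k)) * indicator (ball 0 (2 ^ (k + 1) * r)) w)"
  proof -
    have "g k \<le> (\<Sum>i. g i)" for g :: "nat \<Rightarrow> ennreal"
      using sum_le_suminf[OF summableI, of "{k}" g] by simp
    then show ?thesis .
  qed
  finally show ?thesis by (simp add: add_increasing)
qed

lemma Phi_average_le_dyadic_sum:
  fixes \<mu> :: "'a::euclidean_space measure"
  assumes sets: "sets \<mu> = sets borel" and A: "A \<in> sets borel" and r: "0 < r" and m: "0 \<le> m"
    and density: "\<And>s. 0 < s \<Longrightarrow> emeasure \<mu> (ball x s \<inter> A) \<le> ennreal (m * s ^ DIM('a))"
  shows "ennreal (1 / r ^ DIM('a)) * (\<integral>\<^sup>+ w. ennreal (\<Phi> (norm (x - w) / r)) * indicator A w \<partial>\<mu>)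
          \<le> ennreal m * dyadic_sum DIM('a)"
proof -
  define n where "n = DIM('a)"
  have [measurable]: "ball y s \<in> sets \<mu>" "A \<in> sets \<mu>" for y s using sets A by auto
  have ball_shift: "indicator (ball 0 s) (x - w) = (indicator (ball x s) w :: ennreal)" for s w
    by (simp add: indicator_def dist_norm norm_minus_commute[of x w])
  have "(\<integral>\<^sup>+ w. ennreal (\<Phi> (norm (x - w) / r)) * indicator A w \<partial>\<mu>)
     \<le> (\<integral>\<^sup>+ w. ennreal (\<Phi> 0) * indicator (ball x r \<inter> A) w
          + (\<Sum>k. ennreal (\<Phi> (2 ^ k)) * indicator (ball x (2 ^ (k + 1) * r) \<inter> A) w) \<partial>\<mu>)"
  proof (intro nn_integral_mono)
    fix w
    have "ennreal (\<Phi> (norm (x - w) / r)) * indicator A w \<le>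
       (ennreal (\<Phi> 0) * indicator (ball 0 r) (x - w)
          + (\<Sum>k. ennreal (\<Phi> (2 ^ k)) * indicator (ball 0 (2 ^ (k + 1) * r)) (x - w))) * indicator A w"
      by (intro mult_right_mono Phi_le_dyadic_series r) auto
    then show "ennreal (\<Phi> (norm (x - w) / r)) * indicator A w \<le> ennreal (\<Phi> 0) * indicator (ball x r \<inter> A) w
          + (\<Sum>k. ennreal (\<Phi> (2 ^ k)) * indicator (ball x (2 ^ (k + 1) * r) \<inter> A) w)"
      unfolding ball_shift distrib_right ennreal_suminf_multc[symmetric] mult.assoc indicator_inter_arith .
  qed
  also have "\<dots> = ennreal (\<Phi> 0) * emeasure \<mu> (ball x r \<inter> A)
        + (\<Sum>k. ennreal (\<Phi> (2 ^ k)) * emeasure \<mu> (ball x (2 ^ (k + 1) * r) \<inter> A))"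
    by (simp add: nn_integral_add nn_integral_suminf nn_integral_cmult)
  also have "\<dots> \<le> ennreal (\<Phi> 0) * ennreal (m * r ^ n)
        + (\<Sum>k. ennreal (\<Phi> (2 ^ k)) * ennreal (m * (2 ^ (k + 1) * r) ^ n))"
    using r unfolding n_def by (intro add_mono mult_left_mono suminf_le density) auto
  also have "\<dots> = ennreal (m * r ^ n) * dyadic_sum n"
  proof -
    have "ennreal (\<Phi> (2 ^ k)) * ennreal (m * (2 ^ (k + 1) * r) ^ n)
        = ennreal (m * r ^ n) * ennreal (\<Phi> (2 ^ k) * 2 ^ ((k + 1) * n))" for k
      using m r Phi_nonneg[of "2 ^ k"]
      by (simp add: ennreal_mult'[symmetric] power_mult_distrib power_mult mult_ac power_add)
    then have "(\<Sum>k. ennreal (\<Phi> (2 ^ k)) * ennreal (m * (2 ^ (k + 1) * r) ^ n))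
        = ennreal (m * r ^ n) * (\<Sum>k. ennreal (\<Phi> (2 ^ k) * 2 ^ ((k + 1) * n)))"
      by (simp only: ennreal_suminf_cmult)
    then show ?thesis unfolding dyadic_sum_def by (simp add: distrib_left mult.commute)
  qed
  finally have "ennreal (1 / r ^ n) * (\<integral>\<^sup>+ w. ennreal (\<Phi> (norm (x - w) / r)) * indicator A w \<partial>\<mu>)
       \<le> ennreal (1 / r ^ n) * (ennreal (m * r ^ n) * dyadic_sum n)" by (rule mult_left_mono) simp
  also have "\<dots> = ennreal m * dyadic_sum n"
    using r m by (simp add: ennreal_mult'[symmetric] mult.assoc[symmetric])
  finally show ?thesis unfolding n_def .
qed

lemma nn_integral_Phi_split:
  fixes \<mu> :: "'a::euclidean_space measure"
  assumes sets: "sets \<mu> = sets borel" and r: "0 < r" and a: "0 \<le> a" "a \<le> norm x"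
  shows "(\<integral>\<^sup>+ y. ennreal (\<Phi> (norm (x - y) / r)) \<partial>\<mu>)
     \<le> ennreal (\<Phi> ((norm x - a) / r)) * emeasure \<mu> (cball 0 a)
       + (\<integral>\<^sup>+ y. ennreal (\<Phi> (norm (x - y) / r)) * indicator (UNIV - cball 0 a) y \<partial>\<mu>)"
proof -
  have meas: "(\<lambda>y. ennreal (\<Phi> (norm (x - y) / r))) \<in> borel_measurable \<mu>"
    using borel_measurable_Phi_dist[OF r] sets by (simp cong: measurable_cong_sets)
  have sets_cball: "cball 0 a \<in> sets \<mu>" "UNIV - cball 0 a \<in> sets \<mu>" using sets by auto
  have "(\<integral>\<^sup>+ y. ennreal (\<Phi> (norm (x - y) / r)) \<partial>\<mu>)
      \<le> (\<integral>\<^sup>+ y. ennreal (\<Phi> ((norm x - a) / r)) * indicator (cball 0 a) y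
             + ennreal (\<Phi> (norm (x - y) / r)) * indicator (UNIV - cball 0 a) y \<partial>\<mu>)"
  proof (intro nn_integral_mono)
    fix y
    show "ennreal (\<Phi> (norm (x - y) / r)) \<le> ennreal (\<Phi> ((norm x - a) / r)) * indicator (cball 0 a) y
             + ennreal (\<Phi> (norm (x - y) / r)) * indicator (UNIV - cball 0 a) y"
    proof (cases "y \<in> cball 0 a")
      case True
      then have "norm x - a \<le> norm (x - y)" using norm_triangle_ineq2[of x y] by simp
      then have "\<Phi> (norm (x - y) / r) \<le> \<Phi> ((norm x - a) / r)"
        using a r by (intro Phi_le divide_right_mono) auto
      then show ?thesis using True by (auto intro!: ennreal_leI)
    qed simp
  qed
  also have "\<dots> = ennreal (\<Phi> ((norm x - a) / r)) * emeasure \<mu> (cball 0 a)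
       + (\<integral>\<^sup>+ y. ennreal (\<Phi> (norm (x - y) / r)) * indicator (UNIV - cball 0 a) y \<partial>\<mu>)"
    using sets_cball meas by (subst nn_integral_add) (auto simp: nn_integral_cmult_indicator)
  finally show ?thesis .
qed

text \<open>Outside \<open>cball 0 a\<close> the measure is controlled by its density bound, inside by its mass.\<close>
lemma max_op_upper:
  fixes \<mu> :: "'a::euclidean_space measure"
  assumes sets: "sets \<mu> = sets borel" and a: "0 \<le> a" "a < norm x" and m: "0 \<le> m"
    and sparse: "x \<notin> high_density_set \<mu> (UNIV - cball 0 a) m"
  shows "max_op (\<lambda>z. \<Phi> (norm z)) \<mu> x
     \<le> ennreal (1 / (norm x - a) ^ DIM('a)) * sup_pow_Phi DIM('a) * emeasure \<mu> (cball 0 a)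
       + ennreal m * dyadic_sum DIM('a)"
  unfolding max_op_radial
proof (rule SUP_least)
  fix r :: real assume "r \<in> {0<..}"
  then have r: "0 < r" by simp
  define n where "n = DIM('a)"
  define I where "I = (\<integral>\<^sup>+ y. ennreal (\<Phi> (norm (x - y) / r)) * indicator (UNIV - cball 0 a) y \<partial>\<mu>)"
  have "ennreal (1 / r ^ n) * (\<integral>\<^sup>+ y. ennreal (\<Phi> (norm (x - y) / r)) \<partial>\<mu>)
     \<le> ennreal (1 / r ^ n) * (ennreal (\<Phi> ((norm x - a) / r)) * emeasure \<mu> (cball 0 a) + I)"
    unfolding I_def using a by (intro mult_left_mono nn_integral_Phi_split[OF sets r]) auto
  also have "\<dots> = ennreal (1 / r ^ n * \<Phi> ((norm x - a) / r)) * emeasure \<mu> (cball 0 a)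
       + ennreal (1 / r ^ n) * I"
  proof -
    have "ennreal (1 / r ^ n * \<Phi> ((norm x - a) / r)) = ennreal (1 / r ^ n) * ennreal (\<Phi> ((norm x - a) / r))"
      using r a Phi_nonneg[of "(norm x - a) / r"] by (intro ennreal_mult) auto
    then show ?thesis by (simp only: distrib_left mult.assoc)
  qed
  also have "\<dots> \<le> ennreal (1 / (norm x - a) ^ n) * sup_pow_Phi n * emeasure \<mu> (cball 0 a)
       + ennreal m * dyadic_sum n"
  proof (rule add_mono)
    have "ennreal (1 / r ^ n * \<Phi> ((norm x - a) / r))
        \<le> (SUP r\<in>{0<..}. ennreal (1 / r ^ n * \<Phi> ((norm x - a) / r)))"
      using r by (intro SUP_upper) auto
    also have "\<dots> = ennreal (1 / (norm x - a) ^ n) * sup_pow_Phi n" using a by (intro SUP_dilate_Phi) auto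
    finally show "ennreal (1 / r ^ n * \<Phi> ((norm x - a) / r)) * emeasure \<mu> (cball 0 a)
       \<le> ennreal (1 / (norm x - a) ^ n) * sup_pow_Phi n * emeasure \<mu> (cball 0 a)"
      by (rule mult_right_mono) simp
    have "emeasure \<mu> (ball x s \<inter> (UNIV - cball 0 a)) \<le> ennreal (m * s ^ DIM('a))" if "0 < s" for s
      using sparse that unfolding high_density_set_def by (force simp: not_less)
    then show "ennreal (1 / r ^ n) * I \<le> ennreal m * dyadic_sum n"
      unfolding I_def n_def by (intro Phi_average_le_dyadic_sum[OF sets _ r m]) auto
  qed
  finally show "ennreal (1 / r ^ DIM('a)) * (\<integral>\<^sup>+ y. ennreal (\<Phi> (norm (x - y) / r)) \<partial>\<mu>)
     \<le> ennreal (1 / (norm x - a) ^ DIM('a)) * sup_pow_Phi DIM('a) * emeasure \<mu> (cball 0 a)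
       + ennreal m * dyadic_sum DIM('a)"
    unfolding n_def .
qed

lemma max_op_lower:
  fixes \<mu> :: "'a::euclidean_space measure"
  assumes sets: "sets \<mu> = sets borel" and a: "0 \<le> a" "0 < norm x + a"
  shows "ennreal (1 / (norm x + a) ^ DIM('a)) * sup_pow_Phi DIM('a) * emeasure \<mu> (cball 0 a)
     \<le> max_op (\<lambda>z. \<Phi> (norm z)) \<mu> x"
proof -
  define n where "n = DIM('a)"
  have "ennreal (1 / (norm x + a) ^ n) * sup_pow_Phi n * emeasure \<mu> (cball 0 a)
      = (SUP r\<in>{0<..}. ennreal (1 / r ^ n * \<Phi> ((norm x + a) / r)) * emeasure \<mu> (cball 0 a))"
    using a by (simp add: SUP_dilate_Phi[symmetric] SUP_mult_right_ennreal)
  also have "\<dots> \<le> (SUP r\<in>{0<..}. ennreal (1 / r ^ n) * (\<integral>\<^sup>+ y. ennreal (\<Phi> (norm (x - y) / r)) \<partial>\<mu>))"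
  proof (rule SUP_mono)
    fix r :: real assume "r \<in> {0<..}"
    then have r: "0 < r" by simp
    have "ennreal (\<Phi> ((norm x + a) / r)) * indicator (cball 0 a) y \<le> ennreal (\<Phi> (norm (x - y) / r))" for y
    proof (cases "y \<in> cball 0 a")
      case True
      then have "norm (x - y) \<le> norm x + a" using norm_triangle_ineq4[of x y] by simp
      then have "\<Phi> ((norm x + a) / r) \<le> \<Phi> (norm (x - y) / r)"
        using r by (intro Phi_le divide_right_mono) auto
      then show ?thesis using True by (auto intro!: ennreal_leI)
    qed simp
    then have "ennreal (1 / r ^ n) * (\<integral>\<^sup>+ y. ennreal (\<Phi> ((norm x + a) / r)) * indicator (cball 0 a) y \<partial>\<mu>)
       \<le> ennreal (1 / r ^ n) * (\<integral>\<^sup>+ y. ennreal (\<Phi> (norm (x - y) / r)) \<partial>\<mu>)"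
      by (intro mult_left_mono nn_integral_mono) auto
    moreover have "ennreal (1 / r ^ n * \<Phi> ((norm x + a) / r)) * emeasure \<mu> (cball 0 a)
       = ennreal (1 / r ^ n) * (\<integral>\<^sup>+ y. ennreal (\<Phi> ((norm x + a) / r)) * indicator (cball 0 a) y \<partial>\<mu>)"
    proof -
      have "ennreal (1 / r ^ n * \<Phi> ((norm x + a) / r)) = ennreal (1 / r ^ n) * ennreal (\<Phi> ((norm x + a) / r))"
        using r a Phi_nonneg[of "(norm x + a) / r"] by (intro ennreal_mult) auto
      moreover have "cball 0 a \<in> sets \<mu>" using sets by simp
      ultimately show ?thesis by (simp only: nn_integral_cmult_indicator mult.assoc)
    qed
    ultimately show "\<exists>r'\<in>{0<..}. ennreal (1 / r ^ n * \<Phi> ((norm x + a) / r)) * emeasure \<mu> (cball 0 a)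
       \<le> ennreal (1 / r' ^ n) * (\<integral>\<^sup>+ y. ennreal (\<Phi> (norm (x - y) / r')) \<partial>\<mu>)"
      using r by auto
  qed
  finally show ?thesis unfolding max_op_radial n_def .
qed

lemma max_op_ge_distorted:
  fixes \<mu> :: "'a::euclidean_space measure" and x :: 'a
  assumes sets: "sets \<mu> = sets borel" and fin: "emeasure \<mu> UNIV < \<infinity>"
    and C: "sup_pow_Phi DIM('a) = ennreal C" "0 \<le> C"
    and \<delta>: "0 \<le> \<delta>" "\<delta> < 1" and a: "0 \<le> a" "a \<le> \<delta> * norm x" and x: "x \<noteq> 0"
  shows "ennreal (C / norm x ^ DIM('a) * measure \<mu> (cball 0 a) * (1 / (1 + \<delta>) ^ DIM('a)))
    \<le> max_op (\<lambda>z. \<Phi> (norm z)) \<mu> x"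
proof -
  interpret finite_measure \<mu> using fin sets_eq_imp_space_eq[OF sets] by (intro finite_measureI) auto
  define n where "n = DIM('a)"
  define X where "X = norm x"
  define G where "G = measure \<mu> (cball 0 a)"
  have X: "0 < X" "a \<le> \<delta> * X" using x a(2) by (simp_all add: X_def)
  have G: "0 \<le> G" unfolding G_def by simp
  have "C / X ^ n * G * (1 / (1 + \<delta>) ^ n) \<le> 1 / (X + a) ^ n * C * G"
    using mult_right_mono[OF inverse_power_shift_bounds(2)[OF X(1) a(1) X(2) \<delta>], of "C * G"] C(2) G
    by (simp add: field_simps)
  then have "ennreal (C / X ^ n * G * (1 / (1 + \<delta>) ^ n)) \<le> ennreal (1 / (X + a) ^ n * C * G)"
    by (rule ennreal_leI)
  also have "\<dots> = ennreal (1 / (X + a) ^ n) * ennreal C * ennreal G"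
    by (simp only: ennreal_mult''[OF G] ennreal_mult''[OF C(2)])
  also have "\<dots> = ennreal (1 / (norm x + a) ^ n) * sup_pow_Phi n * emeasure \<mu> (cball 0 a)"
    by (simp only: X_def G_def n_def C emeasure_eq_measure)
  also have "\<dots> \<le> max_op (\<lambda>z. \<Phi> (norm z)) \<mu> x"
    unfolding n_def using sets a X by (intro max_op_lower) (auto simp: X_def add_pos_nonneg)
  finally show ?thesis unfolding X_def G_def n_def .
qed

lemma max_op_le_distorted:
  fixes \<mu> :: "'a::euclidean_space measure" and x :: 'a
  assumes sets: "sets \<mu> = sets borel" and fin: "emeasure \<mu> UNIV < \<infinity>"
    and C: "sup_pow_Phi DIM('a) = ennreal C" "0 \<le> C" and S: "dyadic_sum DIM('a) \<le> ennreal S" "0 \<le> S"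
    and \<delta>: "0 \<le> \<delta>" "\<delta> < 1" and a: "0 \<le> a" "a \<le> \<delta> * norm x" and x: "x \<noteq> 0"
    and m: "0 \<le> m" and sparse: "x \<notin> high_density_set \<mu> (UNIV - cball 0 a) m"
  shows "max_op (\<lambda>z. \<Phi> (norm z)) \<mu> x
    \<le> ennreal (C / norm x ^ DIM('a) * measure \<mu> UNIV * (1 / (1 - \<delta>) ^ DIM('a)) + m * S)"
proof -
  interpret finite_measure \<mu> using fin sets_eq_imp_space_eq[OF sets] by (intro finite_measureI) auto
  define n where "n = DIM('a)"
  define X where "X = norm x"
  define G where "G = measure \<mu> (cball 0 a)"
  have X: "0 < X" "a \<le> \<delta> * X" using x a(2) by (simp_all add: X_def)
  have "\<delta> * X < X" using \<delta> X by simp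
  then have aX: "a < X" using X by linarith
  have G: "0 \<le> G" "G \<le> measure \<mu> UNIV"
    unfolding G_def by (simp, rule finite_measure_mono) (use sets in auto)
  have "max_op (\<lambda>z. \<Phi> (norm z)) \<mu> x
      \<le> ennreal (1 / (norm x - a) ^ n) * sup_pow_Phi n * emeasure \<mu> (cball 0 a) + ennreal m * dyadic_sum n"
    unfolding n_def using sets a aX m sparse by (intro max_op_upper) (auto simp: X_def)
  also have "\<dots> = ennreal (1 / (X - a) ^ n) * ennreal C * ennreal G + ennreal m * dyadic_sum n"
    by (simp only: X_def G_def n_def C emeasure_eq_measure)
  also have "\<dots> \<le> ennreal (1 / (X - a) ^ n) * ennreal C * ennreal G + ennreal m * ennreal S"
    using S(1) unfolding n_def by (intro add_left_mono mult_left_mono) auto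
  also have "\<dots> = ennreal (1 / (X - a) ^ n * C * G + m * S)"
  proof -
    have "0 \<le> 1 / (X - a) ^ n * C * G" "0 \<le> m * S" using aX C(2) G(1) m S(2) by simp_all
    then show ?thesis
      by (simp only: ennreal_plus ennreal_mult''[OF G(1)] ennreal_mult''[OF C(2)] ennreal_mult''[OF S(2)])
  qed
  also have "\<dots> \<le> ennreal (C / X ^ n * measure \<mu> UNIV * (1 / (1 - \<delta>) ^ n) + m * S)"
  proof -
    have "1 / (X - a) ^ n * (C * G) \<le> (1 / (1 - \<delta>) ^ n * (1 / X ^ n)) * (C * measure \<mu> UNIV)"
      using inverse_power_shift_bounds(1)[OF X(1) a(1) X(2) \<delta>] C(2) G aX X \<delta>
      by (intro mult_mono mult_left_mono) auto
    then show ?thesis by (intro ennreal_leI) (simp add: field_simps)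
  qed
  finally show ?thesis unfolding X_def n_def .
qed

definition deviation :: "'a::euclidean_space measure \<Rightarrow> 'a \<Rightarrow> ereal" where
  "deviation \<mu> x = enn2ereal (max_op (\<lambda>z. \<Phi> (norm z)) \<mu> x)
      - enn2ereal (sup_dil (\<lambda>z. \<Phi> (norm z)) x * emeasure \<mu> UNIV)"

lemma abs_deviation_at_sparse_point_le:
  fixes \<mu> :: "'a::euclidean_space measure" and x :: 'a
  assumes sets: "sets \<mu> = sets borel" and fin: "emeasure \<mu> UNIV < \<infinity>"
    and C: "sup_pow_Phi DIM('a) = ennreal C" "0 \<le> C" and S: "dyadic_sum DIM('a) \<le> ennreal S" "0 \<le> S"
    and \<delta>: "0 \<le> \<delta>" "\<delta> < 1" and a: "0 \<le> a" "a \<le> \<delta> * norm x" and x: "x \<noteq> 0"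
    and m: "0 \<le> m" and sparse: "x \<notin> high_density_set \<mu> (UNIV - cball 0 a) m"
  shows "\<bar>deviation \<mu> x\<bar> \<le> ereal (m * S
    + C * (measure \<mu> UNIV * power_distortion DIM('a) \<delta> + measure \<mu> (UNIV - cball 0 a)) / norm x ^ DIM('a))"
proof -
  interpret finite_measure \<mu> using fin sets_eq_imp_space_eq[OF sets] by (intro finite_measureI) auto
  define n where "n = DIM('a)"
  define P where "P = C / norm x ^ n"
  define F where "F = measure \<mu> UNIV"
  define \<eta> where "\<eta> = measure \<mu> (UNIV - cball 0 a)"
  have \<eta>: "0 \<le> \<eta>" "\<eta> \<le> F" "measure \<mu> (cball 0 a) = F - \<eta>"
  proof -
    show "0 \<le> \<eta>" "\<eta> \<le> F" unfolding F_def \<eta>_def by (simp, rule finite_measure_mono) (use sets in auto)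
    show "measure \<mu> (cball 0 a) = F - \<eta>"
      using finite_measure_compl[of "cball 0 a"] sets sets_eq_imp_space_eq[OF sets] unfolding F_def \<eta>_def by simp
  qed
  have P: "0 \<le> P" unfolding P_def using C(2) by simp
  define M where "M = enn2real (max_op (\<lambda>z. \<Phi> (norm z)) \<mu> x)"
  have upper: "max_op (\<lambda>z. \<Phi> (norm z)) \<mu> x \<le> ennreal (P * F * (1 / (1 - \<delta>) ^ n) + m * S)"
    using max_op_le_distorted[OF assms] unfolding P_def F_def n_def .
  then have M: "max_op (\<lambda>z. \<Phi> (norm z)) \<mu> x = ennreal M" "0 \<le> M"
    unfolding M_def by (auto simp: ennreal_enn2real_if top_unique)
  have "ennreal (P * (F - \<eta>) * (1 / (1 + \<delta>) ^ n)) \<le> ennreal M"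
    using max_op_ge_distorted[OF sets fin C \<delta> a x] unfolding P_def n_def \<eta>(3) M(1) .
  moreover have "0 \<le> P * F * (1 / (1 - \<delta>) ^ n) + m * S" using P \<eta> \<delta> m S(2) by simp
  ultimately have "P * (F - \<eta>) * (1 / (1 + \<delta>) ^ n) \<le> M" "M \<le> P * F * (1 / (1 - \<delta>) ^ n) + m * S"
    using upper M by (simp_all only: ennreal_le_iff)
  then have "\<bar>M - P * F\<bar> \<le> m * S + P * (F * ((1 / (1 - \<delta>) ^ n - 1) + (1 - 1 / (1 + \<delta>) ^ n)) + \<eta>)"
    using \<eta> power_distortion_bounds[OF \<delta>] P m S(2) by (intro abs_deviation_le) simp_all
  also have "\<dots> = m * S + C * (F * power_distortion n \<delta> + \<eta>) / norm x ^ n"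
    unfolding P_def power_distortion_def by simp
  finally have dev: "\<bar>M - P * F\<bar> \<le> m * S + C * (F * power_distortion n \<delta> + \<eta>) / norm x ^ n" .
  have "sup_dil (\<lambda>z. \<Phi> (norm z)) x * emeasure \<mu> UNIV = ennreal (1 / norm x ^ n) * ennreal C * ennreal F"
    by (simp only: sup_dil_radial[OF x] n_def C emeasure_eq_measure F_def)
  also have "\<dots> = ennreal (P * F)"
    using C(2) \<eta> unfolding P_def by (simp add: ennreal_mult[symmetric])
  finally have "\<bar>deviation \<mu> x\<bar> = ereal \<bar>M - P * F\<bar>"
    using M P \<eta> unfolding deviation_def by simp
  then show ?thesis using dev unfolding F_def \<eta>_def n_def by simp
qed

lemma deviation_superlevel_subset:
  fixes \<mu> :: "'a::euclidean_space measure"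
  assumes sets: "sets \<mu> = sets borel" and fin: "emeasure \<mu> UNIV < \<infinity>"
    and C: "sup_pow_Phi DIM('a) = ennreal C" "0 \<le> C" and S: "dyadic_sum DIM('a) \<le> ennreal S" "0 < S"
    and \<rho>: "0 < \<rho>" and \<delta>: "0 \<le> \<delta>" "\<delta> < 1" and a: "0 \<le> a" "a \<le> \<delta> * \<rho>" and s: "0 < s"
  defines "\<alpha> \<equiv> C * (measure \<mu> UNIV * power_distortion DIM('a) \<delta> + measure \<mu> (UNIV - cball 0 a))"
  shows "{x \<in> UNIV - ball 0 \<rho>. ereal s < \<bar>deviation \<mu> x\<bar>}
    \<subseteq> high_density_set \<mu> (UNIV - cball 0 a) (s / (2 * S)) \<union> cball 0 (root DIM('a) (2 * \<alpha> / s))"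
proof
  fix x assume x: "x \<in> {x \<in> UNIV - ball 0 \<rho>. ereal s < \<bar>deviation \<mu> x\<bar>}"
  define n where "n = DIM('a)"
  define m where "m = s / (2 * S)"
  have m: "0 < m" "m * S = s / 2" unfolding m_def using s S(2) by auto
  show "x \<in> high_density_set \<mu> (UNIV - cball 0 a) m \<union> cball 0 (root n (2 * \<alpha> / s))"
  proof (cases "x \<in> high_density_set \<mu> (UNIV - cball 0 a) m")
    case sparse: False
    have "\<rho> \<le> norm x" using x by simp
    then have X: "0 < norm x" "a \<le> \<delta> * norm x" using \<rho> a \<delta> by (auto intro: order.trans mult_left_mono)
    have "ereal s < \<bar>deviation \<mu> x\<bar>" using x by simp
    also have "\<dots> \<le> ereal (m * S + \<alpha> / norm x ^ n)"
      using abs_deviation_at_sparse_point_le[OF sets fin C S(1) _ \<delta> a(1) X(2) _ _ sparse] S(2) m(1) X(1)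
      unfolding \<alpha>_def n_def by (simp add: times_divide_eq_left)
    finally have "s < s / 2 + \<alpha> / norm x ^ n" using m(2) by simp
    then have "s * norm x ^ n < 2 * \<alpha>" using X(1) by (simp add: field_simps)
    then have "norm x ^ n < root n (2 * \<alpha> / s) ^ n"
      using s C(2) power_distortion_bounds(4)[OF \<delta>] by (simp add: \<alpha>_def n_def field_simps)
    moreover have "0 \<le> root n (2 * \<alpha> / s)"
      using s C(2) power_distortion_bounds(4)[OF \<delta>] unfolding \<alpha>_def
      by (intro real_root_ge_zero divide_nonneg_nonneg mult_nonneg_nonneg add_nonneg_nonneg) auto
    ultimately show ?thesis by (auto dest: power_less_imp_less_base)
  qed simp
qed

lemma deviation_superlevel_cover:
  fixes \<mu> :: "'a::euclidean_space measure"
  assumes sets: "sets \<mu> = sets borel" and fin: "emeasure \<mu> UNIV < \<infinity>"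
    and C: "sup_pow_Phi DIM('a) = ennreal C" "0 \<le> C" and S: "dyadic_sum DIM('a) \<le> ennreal S" "0 < S"
    and \<rho>: "0 < \<rho>" and \<delta>: "0 \<le> \<delta>" "\<delta> < 1" and a: "0 \<le> a" "a \<le> \<delta> * \<rho>" and s: "0 < s"
  defines "\<alpha> \<equiv> C * (measure \<mu> UNIV * power_distortion DIM('a) \<delta> + measure \<mu> (UNIV - cball 0 a))"
  obtains U where "U \<in> sets borel"
    "{x \<in> UNIV - ball 0 \<rho>. ereal s < \<bar>deviation \<mu> x\<bar>} \<subseteq> U \<union> cball 0 (root DIM('a) (2 * \<alpha> / s))"
    "emeasure lborel U
      \<le> ennreal (2 * 5 ^ DIM('a) * unit_ball_vol (real DIM('a)) * S / s * measure \<mu> (UNIV - cball 0 a))"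
proof -
  interpret finite_measure \<mu> using fin sets_eq_imp_space_eq[OF sets] by (intro finite_measureI) auto
  define m where "m = s / (2 * S)"
  have m: "0 < m" unfolding m_def using s S(2) by simp
  obtain U where U: "U \<in> sets borel" "high_density_set \<mu> (UNIV - cball 0 a) m \<subseteq> U"
    "emeasure lborel U \<le> ennreal (5 ^ DIM('a) * unit_ball_vol (real DIM('a)) / m) * emeasure \<mu> (UNIV - cball 0 a)"
    by (rule high_density_set_cover[of \<mu> "UNIV - cball 0 a", OF sets _ _ m]) (auto simp: less_top[symmetric])
  have "ennreal (5 ^ DIM('a) * unit_ball_vol (real DIM('a)) / m) * emeasure \<mu> (UNIV - cball 0 a)
    = ennreal (2 * 5 ^ DIM('a) * unit_ball_vol (real DIM('a)) * S / s * measure \<mu> (UNIV - cball 0 a))"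
    unfolding emeasure_eq_measure m_def using s S(2) by (simp add: ennreal_mult''[symmetric] field_simps)
  then show ?thesis
    using that[OF U(1)] U(2,3) deviation_superlevel_subset[OF sets fin C S \<rho> \<delta> a s]
    unfolding \<alpha>_def m_def by auto
qed

lemma weak_L1_deviation_le:
  fixes \<mu> :: "'a::euclidean_space measure"
  assumes sets: "sets \<mu> = sets borel" and fin: "emeasure \<mu> UNIV < \<infinity>"
    and C: "sup_pow_Phi DIM('a) = ennreal C" "0 \<le> C" and S: "dyadic_sum DIM('a) \<le> ennreal S" "0 < S"
    and \<rho>: "0 < \<rho>" and \<delta>: "0 \<le> \<delta>" "\<delta> < 1" and a: "0 \<le> a" "a \<le> \<delta> * \<rho>"
  shows "weak_L1_norm (UNIV - ball 0 \<rho>) (deviation \<mu>)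
    \<le> ennreal (2 * unit_ball_vol (real DIM('a)) * ((5 ^ DIM('a) * S + C) * measure \<mu> (UNIV - cball 0 a)
        + C * measure \<mu> UNIV * power_distortion DIM('a) \<delta>))"
  unfolding weak_L1_norm_def
proof (rule SUP_least)
  fix s :: real assume "s \<in> {0<..}"
  then have s: "0 < s" by simp
  define n where "n = DIM('a)"
  define \<omega> where "\<omega> = unit_ball_vol (real n)"
  define \<eta> where "\<eta> = measure \<mu> (UNIV - cball 0 a)"
  define \<alpha> where "\<alpha> = C * (measure \<mu> UNIV * power_distortion n \<delta> + \<eta>)"
  have \<alpha>: "0 \<le> \<alpha>" unfolding \<alpha>_def \<eta>_def using C(2) power_distortion_bounds(4)[OF \<delta>] by simp
  define R where "R = root n (2 * \<alpha> / s)"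
  have R: "0 \<le> R" "R ^ n = 2 * \<alpha> / s" unfolding R_def n_def using \<alpha> s by (simp_all add: DIM_positive)
  define A where "A = {x \<in> UNIV - ball 0 \<rho>. ereal s < \<bar>deviation \<mu> x\<bar>}"
  obtain U where U: "U \<in> sets borel" "A \<subseteq> U \<union> cball 0 R"
    "emeasure lborel U \<le> ennreal (2 * 5 ^ n * \<omega> * S / s * \<eta>)"
    unfolding A_def R_def \<alpha>_def \<eta>_def \<omega>_def n_def by (rule deviation_superlevel_cover[OF assms s])
  have "leb_outer A \<le> emeasure lborel (U \<union> cball 0 R)"
    using U by (intro leb_outer_le_emeasure) auto
  also have "\<dots> \<le> emeasure lborel U + emeasure lborel (cball (0::'a) R)"
    using U(1) by (intro emeasure_subadditive) auto
  also have "\<dots> \<le> ennreal (2 * 5 ^ n * \<omega> * S / s * \<eta>) + ennreal (\<omega> * R ^ n)"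
    using U(3) R(1) by (intro add_mono) (simp_all add: emeasure_cball \<omega>_def n_def)
  also have "\<dots> = ennreal (2 * 5 ^ n * \<omega> * S / s * \<eta> + \<omega> * R ^ n)"
    using R(1) S(2) s by (intro ennreal_plus[symmetric]) (auto simp: \<omega>_def \<eta>_def)
  finally have "ennreal s * leb_outer A \<le> ennreal (s * (2 * 5 ^ n * \<omega> * S / s * \<eta> + \<omega> * R ^ n))"
    using s by (simp add: mult_left_mono ennreal_mult')
  also have "s * (2 * 5 ^ n * \<omega> * S / s * \<eta> + \<omega> * R ^ n)
      = 2 * \<omega> * ((5 ^ n * S + C) * \<eta> + C * measure \<mu> UNIV * power_distortion n \<delta>)"
    unfolding R(2) \<alpha>_def using s by (simp add: field_simps)
  finally show "ennreal s * leb_outer A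
    \<le> ennreal (2 * unit_ball_vol (real DIM('a)) * ((5 ^ DIM('a) * S + C) * measure \<mu> (UNIV - cball 0 a)
        + C * measure \<mu> UNIV * power_distortion DIM('a) \<delta>))"
    unfolding \<omega>_def \<eta>_def n_def .
qed

lemma real_profile_constants:
  assumes "(\<integral>\<^sup>+ (z::'a::euclidean_space). ennreal (\<Phi> (norm z)) \<partial>lborel) < \<infinity>"
  obtains C S where "sup_pow_Phi DIM('a) = ennreal C" "0 \<le> C" "dyadic_sum DIM('a) \<le> ennreal S" "0 < S"
proof
  show "sup_pow_Phi DIM('a) = ennreal (enn2real (sup_pow_Phi DIM('a)))" "0 \<le> enn2real (sup_pow_Phi DIM('a))"
    using sup_pow_Phi_finite[OF assms] by auto
  have "dyadic_sum DIM('a) = ennreal (enn2real (dyadic_sum DIM('a)))"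
    using dyadic_sum_finite[OF assms] by simp
  also have "\<dots> \<le> ennreal (enn2real (dyadic_sum DIM('a)) + 1)" by (intro ennreal_leI) simp
  finally show "dyadic_sum DIM('a) \<le> ennreal (enn2real (dyadic_sum DIM('a)) + 1)" .
  show "0 < enn2real (dyadic_sum DIM('a)) + 1" by (intro add_nonneg_pos) simp_all
qed

lemma weak_L1_dilate_deviation_le:
  fixes V :: "'a::euclidean_space measure"
  assumes V: "sets V = sets borel" "emeasure V UNIV < \<infinity>"
    and C: "sup_pow_Phi DIM('a) = ennreal C" "0 \<le> C" and S: "dyadic_sum DIM('a) \<le> ennreal S" "0 < S"
    and \<rho>: "0 < \<rho>" and \<delta>: "0 \<le> \<delta>" "\<delta> < 1" and t: "0 < t" "0 \<le> R" "t * R \<le> \<delta> * \<rho>"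
  shows "weak_L1_norm (UNIV - ball 0 \<rho>) (\<lambda>x. enn2ereal (max_op (\<lambda>z. \<Phi> (norm z)) (dilate_measure t V) x)
      - enn2ereal (sup_dil (\<lambda>z. \<Phi> (norm z)) x * emeasure V UNIV))
    \<le> ennreal (2 * unit_ball_vol (real DIM('a)) * (5 ^ DIM('a) * S + C) * measure V (UNIV - cball 0 R)
      + 2 * unit_ball_vol (real DIM('a)) * C * measure V UNIV * power_distortion DIM('a) \<delta>)"
proof -
  note dilate = emeasure_dilate_measure_cball[OF V(1) t(1)]
  have "emeasure (dilate_measure t V) UNIV < \<infinity>" using dilate(1) V(2) by simp
  then have "weak_L1_norm (UNIV - ball 0 \<rho>) (deviation (dilate_measure t V))
    \<le> ennreal (2 * unit_ball_vol (real DIM('a)) * ((5 ^ DIM('a) * S + C)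
      * measure (dilate_measure t V) (UNIV - cball 0 (t * R))
      + C * measure (dilate_measure t V) UNIV * power_distortion DIM('a) \<delta>))"
    using t by (intro weak_L1_deviation_le[OF sets_dilate_measure _ C S \<rho> \<delta>]) auto
  moreover have "2 * unit_ball_vol (real DIM('a)) * ((5 ^ DIM('a) * S + C) * measure V (UNIV - cball 0 R)
      + C * measure V UNIV * power_distortion DIM('a) \<delta>)
    = 2 * unit_ball_vol (real DIM('a)) * (5 ^ DIM('a) * S + C) * measure V (UNIV - cball 0 R)
      + 2 * unit_ball_vol (real DIM('a)) * C * measure V UNIV * power_distortion DIM('a) \<delta>"
    by (simp add: algebra_simps)
  ultimately show ?thesis unfolding deviation_def by (simp only: measure_def dilate)
qed

end

theorem corollary2p3:
  fixes \<Phi> :: "real \<Rightarrow> real" and \<phi> :: "'a::euclidean_space \<Rightarrow> real"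
    and V :: "'a measure" and \<rho> :: real
  assumes \<phi>_def: "\<And>x. \<phi> x = \<Phi> (norm x)"
    and \<Phi>_nonneg: "\<And>s. s \<ge> 0 \<Longrightarrow> \<Phi> s \<ge> 0"
    and \<Phi>_decr: "antimono_on {0..} \<Phi>"
    and majorant: "\<exists>\<kappa>::real \<Rightarrow> real. antimono_on {0..} \<kappa>
        \<and> (\<forall>x. \<phi> x \<le> \<kappa> (norm x))
        \<and> continuous_on UNIV (\<lambda>x::'a. \<kappa> (norm x))
        \<and> integrable lborel (\<lambda>x::'a. \<kappa> (norm x))"
    and V_sets: "sets V = sets borel"
    and V_finite: "emeasure V UNIV < \<infinity>"
    and V_ac: "absolutely_continuous lborel V"
    and \<rho>_pos: "\<rho> > 0"
  shows "((\<lambda>t. weak_L1_norm (UNIV - ball 0 \<rho>)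
            (\<lambda>x. enn2ereal (max_op \<phi> (dilate_measure t V) x)
                 - enn2ereal (sup_dil \<phi> x * emeasure V UNIV)))
          \<longlongrightarrow> 0) (at_right 0)"
proof -
  interpret decreasing_profile \<Phi> using \<Phi>_nonneg \<Phi>_decr by unfold_locales auto
  have \<phi>: "\<phi> = (\<lambda>x. \<Phi> (norm x))" using \<phi>_def by auto
  obtain \<kappa> where \<kappa>: "\<And>x. \<phi> x \<le> \<kappa> (norm x)" "integrable lborel (\<lambda>x::'a. \<kappa> (norm x))"
    using majorant by blast
  have "(\<integral>\<^sup>+ (z::'a). ennreal (\<Phi> (norm z)) \<partial>lborel) \<le> (\<integral>\<^sup>+ (z::'a). ennreal (\<kappa> (norm z)) \<partial>lborel)"
    using \<kappa>(1) unfolding \<phi> by (intro nn_integral_mono ennreal_leI) auto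
  also have "\<dots> < \<infinity>" using integrableD(2)[OF \<kappa>(2)] by (simp add: less_top)
  finally obtain C S where CS: "sup_pow_Phi DIM('a) = ennreal C" "0 \<le> C" "dyadic_sum DIM('a) \<le> ennreal S" "0 < S"
    by (rule real_profile_constants)
  define K where "K = 2 * unit_ball_vol (real DIM('a))"
  have "weak_L1_norm (UNIV - ball 0 \<rho>) (\<lambda>x. enn2ereal (max_op \<phi> (dilate_measure t V) x)
        - enn2ereal (sup_dil \<phi> x * emeasure V UNIV))
      \<le> ennreal (K * (5 ^ DIM('a) * S + C) * measure V (UNIV - cball 0 R)
        + K * C * measure V UNIV * power_distortion DIM('a) \<delta>)"
    if "0 < R" "0 < \<delta>" "\<delta> < 1" "0 < t" "t * R \<le> \<delta> * \<rho>" for R \<delta> t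
    using that unfolding \<phi> K_def by (intro weak_L1_dilate_deviation_le V_sets V_finite CS \<rho>_pos) auto
  moreover have "finite_measure V" using V_finite sets_eq_imp_space_eq[OF V_sets] by (intro finite_measureI) auto
  then have "((\<lambda>R. K * (5 ^ DIM('a) * S + C) * measure V (UNIV - cball 0 R)) \<longlongrightarrow> 0) at_top"
    by (intro tendsto_mult_right_zero tendsto_measure_compl_cball V_sets)
  moreover have "((\<lambda>\<delta>. K * C * measure V UNIV * power_distortion DIM('a) \<delta>) \<longlongrightarrow> 0) (at_right 0)"
    by (intro tendsto_mult_right_zero power_distortion_tendsto_0)
  ultimately show ?thesis by (rule tendsto_zero_at_right_of_two_scale_bound[OF \<rho>_pos])
qed

end
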